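(* Let $\Gamma$ be a finite graph with vertex set $\{1,\dots,n\}$ and $c$ an acyclic orientation of $\Gamma$. For an equivalence class $u$ of $c$-admissible sequences, let $\phi(u)$ be the function on vertices with $\phi(u)_x$ equal to the number of occurrences of $x$ in any representative of $u$. Then the map $\phi$ from the set $\mathfrak{S}_c$ of equivalence classes of $c$-admissible sequences to integer-valued functions on the vertices is injective.
   Context: For an acyclic orientation $c$ of $\Gamma$ and a sink $x$ of $(\Gamma,c)$, $s_xcs_x$ denotes the orientation obtained by reversing all edges coming into $x$. A sequence $x_1,\dots,x_N$ of vertices is $c$-admissible if $x_1$ is a sink of $(\Gamma,c)$, $x_2$ is a sink of $(\Gamma, s_{x_1}cs_{x_1})$, $x_3$ is a sink of $(\Gamma, s_{x_2}s_{x_1}cs_{x_1}s_{x_2})$, and so on. Two admissible sequences are equivalent if one can be obtained from the other by repeatedly interchanging adjacent entries which are non-adjacent vertices of $\Gamma$ (this preserves admissibility and the number of occurrences of each vertex); $\mathfrak{S}_c$ is the set of equivalence classes. *)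

theory Defs
  imports Main
begin

definition simple_graph :: "nat \<Rightarrow> (nat \<times> nat) set \<Rightarrow> bool" where
  "simple_graph n E \<longleftrightarrow> E \<subseteq> {1..n} \<times> {1..n} \<and> sym E \<and> irrefl E"

text \<open>An orientation c is a set of arcs (x,y) meaning x \<rightarrow> y; it picks exactly one
  direction of each edge of E and has no directed cycles.\<close>
definition acyclic_orientation :: "(nat \<times> nat) set \<Rightarrow> (nat \<times> nat) set \<Rightarrow> bool" where
  "acyclic_orientation E c \<longleftrightarrow> c \<subseteq> E \<and> (\<forall>(x,y)\<in>E. ((x,y) \<in> c) \<noteq> ((y,x) \<in> c)) \<and> acyclic c"

definition is_sink :: "nat \<Rightarrow> (nat \<times> nat) set \<Rightarrow> nat \<Rightarrow> bool" where
  "is_sink n c x \<longleftrightarrow> x \<in> {1..n} \<and> (\<forall>y. (x,y) \<notin> c)"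

text \<open>s_x c s_x: reverse all arcs coming into x.\<close>
definition flip_at :: "(nat \<times> nat) set \<Rightarrow> nat \<Rightarrow> (nat \<times> nat) set" where
  "flip_at c x = {(a,b). (a,b) \<in> c \<and> b \<noteq> x} \<union> {(x,a) | a. (a,x) \<in> c}"

fun admissible :: "nat \<Rightarrow> (nat \<times> nat) set \<Rightarrow> nat list \<Rightarrow> bool" where
  "admissible n c [] = True"
| "admissible n c (x # xs) = (is_sink n c x \<and> admissible n (flip_at c x) xs)"

definition swap_step :: "(nat \<times> nat) set \<Rightarrow> nat list \<Rightarrow> nat list \<Rightarrow> bool" where
  "swap_step E u v \<longleftrightarrow> (\<exists>xs a b ys. u = xs @ [a, b] @ ys \<and> v = xs @ [b, a] @ ys \<and> (a, b) \<notin> E)"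

definition seq_equiv :: "(nat \<times> nat) set \<Rightarrow> (nat list \<times> nat list) set" where
  "seq_equiv E = {(u, v). (swap_step E)\<^sup>*\<^sup>* u v}"

definition S_c :: "nat \<Rightarrow> (nat \<times> nat) set \<Rightarrow> (nat \<times> nat) set \<Rightarrow> nat list set set" where
  "S_c n E c = {w. admissible n c w} // seq_equiv E"

definition phi :: "nat list set \<Rightarrow> (nat \<Rightarrow> int)" where
  "phi u = the_elem ((\<lambda>w x. int (count_list w x)) ` u)"

end

theory Submission
  imports Defs
begin

text \<open>Two admissible sequences with the same letter counts are equivalent, by induction on
  the length. If the first sequence starts with the sink x, consider the first occurrence of x
  in the second sequence. No letter z before it is adjacent to x: x is still a sink when z is
  flipped, and two adjacent vertices cannot both be sinks. Hence x can be swapped to the front,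
  and the remaining sequences are admissible for the orientation flipped at x.\<close>

definition is_orientation :: "(nat \<times> nat) set \<Rightarrow> (nat \<times> nat) set \<Rightarrow> bool" where
  "is_orientation E c \<longleftrightarrow> c \<subseteq> E \<and> (\<forall>(x,y)\<in>E. ((x,y) \<in> c) \<noteq> ((y,x) \<in> c))"

lemma is_orientation_flip_at:
  assumes "sym E" "irrefl E" "is_orientation E c" "is_sink n c x"
  shows "is_orientation E (flip_at c x)"
  using assms unfolding is_orientation_def flip_at_def is_sink_def sym_def irrefl_def
  by (auto; blast)

lemma is_sink_flip_at:
  assumes "is_sink n c x" "y \<noteq> x"
  shows "is_sink n (flip_at c y) x"
  using assms unfolding is_sink_def flip_at_def by auto

lemma sinks_not_adjacent:
  assumes "is_orientation E c" "is_sink n c x" "is_sink n c z"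
  shows "(z, x) \<notin> E"
  using assms unfolding is_orientation_def is_sink_def by auto

lemma flip_at_commute:
  assumes "(a, b) \<notin> c" "(b, a) \<notin> c"
  shows "flip_at (flip_at c a) b = flip_at (flip_at c b) a"
  using assms unfolding flip_at_def by (cases "a = b") auto

lemma admissible_append:
  "admissible n c (xs @ ys) \<longleftrightarrow> admissible n c xs \<and> admissible n (foldl flip_at c xs) ys"
  by (induction xs arbitrary: c) auto

lemma admissible_not_adjacent_to_sink:
  assumes "sym E" "irrefl E" "is_orientation E c" "admissible n c p"
    and "is_sink n c x" "x \<notin> set p"
  shows "\<forall>z\<in>set p. (z, x) \<notin> E"
  using assms(3-)
proof (induction p arbitrary: c)
  case Nil
  then show ?case by simp
next
  case (Cons z p)
  then have z: "is_sink n c z" and p: "admissible n (flip_at c z) p" by auto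
  have "(z, x) \<notin> E"
    using sinks_not_adjacent[OF Cons.prems(1,3) z] .
  moreover have "\<forall>z\<in>set p. (z, x) \<notin> E"
    using Cons.IH[OF is_orientation_flip_at[OF assms(1,2) Cons.prems(1) z] p]
      is_sink_flip_at[OF Cons.prems(3)] Cons.prems(4) by auto
  ultimately show ?case by simp
qed

lemma admissible_swap:
  assumes "sym E" "irrefl E" "is_orientation E c" "(a, b) \<notin> E"
    and "admissible n c (xs @ [a, b] @ ys)"
  shows "admissible n c (xs @ [b, a] @ ys)"
  using assms(3-)
proof (induction xs arbitrary: c)
  case Nil
  show ?case
  proof (cases "a = b")
    case True
    then show ?thesis using Nil.prems by simp
  next
    case False
    have arcs: "(a, b) \<notin> c" "(b, a) \<notin> c"
      using Nil.prems assms(1) unfolding is_orientation_def sym_def by auto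
    have a: "is_sink n c a" and b: "is_sink n (flip_at c a) b"
      and ys: "admissible n (flip_at (flip_at c a) b) ys" using Nil.prems by auto
    have "is_sink n c b" "is_sink n (flip_at c b) a"
      using a b arcs False unfolding is_sink_def flip_at_def by auto
    then show ?thesis using ys flip_at_commute[OF arcs] by simp
  qed
next
  case (Cons z xs)
  then show ?case using is_orientation_flip_at[OF assms(1,2)] by auto
qed

lemma swap_step_Cons:
  "(swap_step E)\<^sup>*\<^sup>* u v \<Longrightarrow> (swap_step E)\<^sup>*\<^sup>* (z # u) (z # v)"
proof (induction rule: rtranclp_induct)
  case base
  then show ?case by simp
next
  case (step v w)
  have "swap_step E (z # v) (z # w)"
    using step(2) unfolding swap_step_def by (metis append_Cons)
  with step(3) show ?case by (rule rtranclp.rtrancl_into_rtrancl)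
qed

lemma admissible_move_to_front:
  assumes "sym E" "irrefl E" "is_orientation E c" "\<forall>z\<in>set p. (z, x) \<notin> E"
    and "admissible n c (p @ x # q)"
  shows "admissible n c (x # p @ q) \<and> (swap_step E)\<^sup>*\<^sup>* (x # p @ q) (p @ x # q)"
  using assms(3-)
proof (induction p arbitrary: c)
  case Nil
  then show ?case by simp
next
  case (Cons z p)
  then have z: "is_sink n c z" and rest: "admissible n (flip_at c z) (p @ x # q)" by auto
  have IH: "admissible n (flip_at c z) (x # p @ q)"
    "(swap_step E)\<^sup>*\<^sup>* (x # p @ q) (p @ x # q)"
    using Cons.IH[OF is_orientation_flip_at[OF assms(1,2) Cons.prems(1) z]] Cons.prems(2) rest
    by auto
  have xz: "(x, z) \<notin> E" using Cons.prems(2) assms(1) unfolding sym_def by auto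
  have zx: "admissible n c ([] @ [z, x] @ p @ q)" using z IH(1) by simp
  have "admissible n c ([] @ [x, z] @ p @ q)"
    using admissible_swap[OF assms(1,2) Cons.prems(1) _ zx] Cons.prems(2) by simp
  moreover have "swap_step E (x # z # p @ q) (z # x # p @ q)"
    unfolding swap_step_def using xz by (metis append_Cons append_Nil)
  moreover have "(swap_step E)\<^sup>*\<^sup>* (z # x # p @ q) (z # p @ x # q)"
    using swap_step_Cons[OF IH(2)] .
  ultimately show ?case by (simp add: converse_rtranclp_into_rtranclp)
qed

lemma admissible_same_counts_swap_equivalent:
  assumes "sym E" "irrefl E" "is_orientation E c"
    and "admissible n c w" "admissible n c w'" "count_list w = count_list w'"
  shows "(swap_step E)\<^sup>*\<^sup>* w w'"
  using assms(3-)
proof (induction w arbitrary: c w')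
  case Nil
  then have "w' = []" by (metis count_list_0_iff neq_Nil_conv list.set_intros(1) count_list.simps(1))
  then show ?case by simp
next
  case (Cons x w)
  then have x: "is_sink n c x" and w: "admissible n (flip_at c x) w" by auto
  have "x \<in> set w'"
    using Cons.prems(4) by (metis count_list_0_iff list.set_intros(1))
  then obtain p q where w': "w' = p @ x # q" and "x \<notin> set p"
    by (metis split_list_first)
  then have "\<forall>z\<in>set p. (z, x) \<notin> E"
    using admissible_not_adjacent_to_sink[OF assms(1,2) Cons.prems(1) _ x]
      Cons.prems(3) admissible_append by auto
  then have front: "admissible n c (x # p @ q)" "(swap_step E)\<^sup>*\<^sup>* (x # p @ q) w'"
    using admissible_move_to_front[OF assms(1,2) Cons.prems(1)] Cons.prems(3) w' by auto
  have "count_list w = count_list (p @ q)"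
    using Cons.prems(4) w' by (auto simp: fun_eq_iff split: if_splits)
  then have "(swap_step E)\<^sup>*\<^sup>* w (p @ q)"
    using Cons.IH[OF is_orientation_flip_at[OF assms(1,2) Cons.prems(1) x] w] front(1) by simp
  then show ?case using swap_step_Cons front(2) by (meson rtranclp_trans)
qed

lemma count_list_swap_equivalent:
  "(swap_step E)\<^sup>*\<^sup>* u v \<Longrightarrow> count_list u = count_list v"
  by (induction rule: rtranclp_induct) (auto simp: swap_step_def fun_eq_iff)

lemma phi_seq_equiv_class:
  "phi (seq_equiv E `` {w}) = (\<lambda>x. int (count_list w x))"
proof -
  have "(\<lambda>w x. int (count_list w x)) ` (seq_equiv E `` {w}) = {\<lambda>x. int (count_list w x)}"
    unfolding seq_equiv_def by (auto dest!: count_list_swap_equivalent)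
  then show ?thesis unfolding phi_def by simp
qed

theorem corollary6:
  assumes "simple_graph n E"
    and "acyclic_orientation E c"
  shows "inj_on phi (S_c n E c)"
proof (rule inj_onI)
  have E: "sym E" "irrefl E" using assms(1) unfolding simple_graph_def by auto
  have c: "is_orientation E c"
    using assms(2) unfolding acyclic_orientation_def is_orientation_def by auto
  fix U V assume "U \<in> S_c n E c" "V \<in> S_c n E c" and phi: "phi U = phi V"
  then obtain w w' where w: "admissible n c w" "U = seq_equiv E `` {w}"
    and w': "admissible n c w'" "V = seq_equiv E `` {w'}"
    unfolding S_c_def by (auto elim!: quotientE)
  have "count_list w = count_list w'"
    using phi w(2) w'(2) by (simp add: phi_seq_equiv_class fun_eq_iff)
  then have "(swap_step E)\<^sup>*\<^sup>* w w'" "(swap_step E)\<^sup>*\<^sup>* w' w"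
    using admissible_same_counts_swap_equivalent[OF E c] w(1) w'(1) by auto
  then show "U = V" unfolding w(2) w'(2) seq_equiv_def by (auto intro: rtranclp_trans)
qed

end
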